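(* Let $n\geq 1$ and $k\geq 1$ be integers with $k\not\equiv 1 \pmod 3$. Then $\gcd(B_{k,n},B_{k,n+1})=1$.
   Context: For an integer $k\geq 1$, the generalized balancing numbers are defined by $B_{k,0}=0$, $B_{k,1}=1$ and $B_{k,n}=3kB_{k,n-1}+(1-k)B_{k,n-2}$ for $n\geq 2$. *)

theory Defs
  imports Main
begin

fun B :: "int \<Rightarrow> nat \<Rightarrow> int" where
  "B k 0 = 0"
| "B k (Suc 0) = 1"
| "B k (Suc (Suc n)) = 3 * k * B k (Suc n) + (1 - k) * B k n"

end

theory Submission
  imports Defs "HOL-Number_Theory.Cong"
begin

text \<open>Modulo \<open>k - 1\<close> the recurrence degenerates to \<open>B (n + 2) \<equiv> 3 B (n + 1)\<close>, so
  \<open>B (n + 1) \<equiv> 3 ^ n\<close> is coprime to \<open>k - 1\<close> whenever 3 does not divide \<open>k - 1\<close>.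
  A common divisor of \<open>B (n + 1)\<close> and \<open>B (n + 2)\<close> then divides \<open>(1 - k) B n\<close>, hence
  \<open>B n\<close>, and induction descends to \<open>gcd (B 0) (B 1) = 1\<close>.\<close>

lemma B_Suc_Suc_cong: "[B k (Suc (Suc n)) = 3 * B k (Suc n)] (mod (k - 1))"
proof -
  have "B k (Suc (Suc n)) - 3 * B k (Suc n) = (k - 1) * (3 * B k (Suc n) - B k n)"
    by (simp add: algebra_simps)
  then show ?thesis
    by (simp add: cong_iff_dvd_diff)
qed

lemma B_Suc_cong_power: "[B k (Suc n) = 3 ^ n] (mod (k - 1))"
proof (induction n)
  case 0
  then show ?case by simp
next
  case (Suc n)
  have "[B k (Suc (Suc n)) = 3 * B k (Suc n)] (mod (k - 1))"
    by (rule B_Suc_Suc_cong)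
  also have "[3 * B k (Suc n) = 3 * 3 ^ n] (mod (k - 1))"
    using Suc.IH by (rule cong_scalar_left)
  finally show ?case by simp
qed

lemma coprime_B_Suc:
  assumes "coprime 3 (k - 1)"
  shows "coprime (B k (Suc n)) (k - 1)"
proof -
  have "coprime (3 ^ n) (k - 1)"
    using assms by simp
  then show ?thesis
    using cong_imp_coprime cong_sym B_Suc_cong_power by blast
qed

lemma coprime_B_B_Suc:
  assumes "coprime 3 (k - 1)"
  shows "coprime (B k n) (B k (Suc n))"
proof (induction n)
  case 0
  then show ?case by simp
next
  case (Suc n)
  have "coprime (B k (Suc n)) (1 - k)"
    using coprime_B_Suc[OF assms] by (metis coprime_minus_right_iff minus_diff_eq)
  with Suc.IH have "coprime (B k (Suc n)) ((1 - k) * B k n)"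
    by (simp add: coprime_commute)
  then show ?case
    by (simp only: B.simps(3) coprime_iff_gcd_eq_1 gcd_add_mult)
qed

theorem mainTheorem11:
  fixes k :: int and n :: nat
  assumes "n \<ge> 1" and "k \<ge> 1" and "k mod 3 \<noteq> 1"
  shows "gcd (B k n) (B k (n + 1)) = 1"
proof -
  have "\<not> 3 dvd k - 1"
    using assms(3) by presburger
  then have "coprime 3 (k - 1)"
    by (simp add: prime_imp_coprime_int)
  then show ?thesis
    using coprime_B_B_Suc by simp
qed

end
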